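(* Let $\mathcal{H}$ be a Hilbert space of finite or countably infinite dimension, $\Omega$ a finite set and $\mathcal{I}$ an instrument on $\Omega$ that is repeatable, i.e. $\mathrm{tr}[\varrho\,\mathcal{I}_{\omega_1}\circ\mathcal{I}_{\omega_2}(\mathbb{1})]=0$ for all states $\varrho$ and all $\omega_1\neq\omega_2$. Then $\mathrm{sat}(\mathcal{I})=1$.
   Context: An instrument on a finite set $\Omega$ (Heisenberg picture) is a family $(\mathcal{I}_\omega)_{\omega\in\Omega}$ of normal completely positive maps on $\mathcal{L}(\mathcal{H})$ with $\sum_\omega\mathcal{I}_\omega(\mathbb{1})=\mathbb{1}$. For observables $\mathsf{A},\mathsf{B}$ with finite outcome sets (maps into positive operators summing to $\mathbb{1}$), $\mathsf{A}\preceq\mathsf{B}$ means there is $\kappa:\Omega_\mathsf{A}\times\Omega_\mathsf{B}\to[0,1]$ with $\sum_\omega\kappa(\omega|\omega')=1$ for all $\omega'$ and $\mathsf{A}(\omega)=\sum_{\omega'}\kappa(\omega|\omega')\mathsf{B}(\omega')$; $\mathsf{A}\simeq\mathsf{B}$ means both directions hold. $\mathsf{A}^\mathcal{I}_n(\omega_1,\ldots,\omega_n)=\mathcal{I}_{\omega_1}\circ\cdots\circ\mathcal{I}_{\omega_n}(\mathbb{1})$ on $\Omega^n$. The saturation step $\mathrm{sat}(\mathcal{I})$ is the smallest positive integer $n$ with $\mathsf{A}^\mathcal{I}_n\simeq\mathsf{A}^\mathcal{I}_{n+1}$ ($\infty$ if none). *)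

theory Defs
  imports Complex_Main "HOL-Library.Function_Algebras" "HOL-Library.Extended_Nat"
begin

text \<open>The Hilbert space is modelled concretely as l2(D) for an index set D of naturals
  (D finite: finite dimension card D; D infinite: countably infinite dimension).
  Bounded operators are maps vec => vec, linear and bounded on l2(D), mapping l2(D) into
  itself and sending everything outside l2(D) to 0 (a normalisation making equality of
  operators plain equality of functions).\<close>

type_synonym vec = "nat \<Rightarrow> complex"
type_synonym op = "vec \<Rightarrow> vec"

definition l2 :: "nat set \<Rightarrow> vec set" where
  "l2 D = {x. (\<forall>i. i \<notin> D \<longrightarrow> x i = 0) \<and> summable (\<lambda>i. (cmod (x i))^2)}"

definition inner_l2 :: "vec \<Rightarrow> vec \<Rightarrow> complex" where
  "inner_l2 x y = (\<Sum>i. cnj (x i) * y i)"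

definition norm_l2 :: "vec \<Rightarrow> real" where
  "norm_l2 x = sqrt (\<Sum>i. (cmod (x i))^2)"

definition bounded_op :: "nat set \<Rightarrow> op \<Rightarrow> bool" where
  "bounded_op D T \<longleftrightarrow>
     (\<forall>x. x \<notin> l2 D \<longrightarrow> T x = 0) \<and>
     (\<forall>x\<in>l2 D. T x \<in> l2 D) \<and>
     (\<forall>x\<in>l2 D. \<forall>y\<in>l2 D. \<forall>a b. T (\<lambda>i. a * x i + b * y i) = (\<lambda>i. a * T x i + b * T y i)) \<and>
     (\<exists>C. \<forall>x\<in>l2 D. norm_l2 (T x) \<le> C * norm_l2 x)"

definition id_op :: "nat set \<Rightarrow> op" where
  "id_op D = (\<lambda>x. if x \<in> l2 D then x else 0)"

definition positive_op :: "nat set \<Rightarrow> op \<Rightarrow> bool" where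
  "positive_op D T \<longleftrightarrow> bounded_op D T \<and>
     (\<forall>x\<in>l2 D. Im (inner_l2 x (T x)) = 0 \<and> Re (inner_l2 x (T x)) \<ge> 0)"

definition block_positive :: "nat set \<Rightarrow> nat \<Rightarrow> (nat \<Rightarrow> nat \<Rightarrow> op) \<Rightarrow> bool" where
  "block_positive D n T \<longleftrightarrow>
     (\<forall>i<n. \<forall>j<n. bounded_op D (T i j)) \<and>
     (\<forall>x. (\<forall>i<n. x i \<in> l2 D) \<longrightarrow>
        Im (\<Sum>i<n. \<Sum>j<n. inner_l2 (x i) (T i j (x j))) = 0 \<and>
        Re (\<Sum>i<n. \<Sum>j<n. inner_l2 (x i) (T i j (x j))) \<ge> 0)"

definition lin_comb_op :: "complex \<Rightarrow> op \<Rightarrow> complex \<Rightarrow> op \<Rightarrow> op" where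
  "lin_comb_op a S b T = (\<lambda>x i. a * S x i + b * T x i)"

definition linear_map :: "nat set \<Rightarrow> (op \<Rightarrow> op) \<Rightarrow> bool" where
  "linear_map D \<Phi> \<longleftrightarrow>
     (\<forall>T. bounded_op D T \<longrightarrow> bounded_op D (\<Phi> T)) \<and>
     (\<forall>S T a b. bounded_op D S \<longrightarrow> bounded_op D T \<longrightarrow>
        \<Phi> (lin_comb_op a S b T) = lin_comb_op a (\<Phi> S) b (\<Phi> T))"

text \<open>Complete positivity: id_n tensor Phi is positive for every n.\<close>
definition cp_map :: "nat set \<Rightarrow> (op \<Rightarrow> op) \<Rightarrow> bool" where
  "cp_map D \<Phi> \<longleftrightarrow> (\<forall>n T. block_positive D n T \<longrightarrow> block_positive D n (\<lambda>i j. \<Phi> (T i j)))"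

text \<open>Normality: for increasing sequences of positive operators converging weakly to
  their supremum T, the images converge weakly to the image of T (for separable H this is
  equivalent to normality).\<close>
definition normal_map :: "nat set \<Rightarrow> (op \<Rightarrow> op) \<Rightarrow> bool" where
  "normal_map D \<Phi> \<longleftrightarrow>
     (\<forall>Tk T. (\<forall>k. positive_op D (Tk k)) \<and> (\<forall>k. positive_op D (Tk (Suc k) - Tk k)) \<and>
        bounded_op D T \<and> (\<forall>x\<in>l2 D. (\<lambda>k. inner_l2 x (Tk k x)) \<longlonglongrightarrow> inner_l2 x (T x))
      \<longrightarrow> (\<forall>x\<in>l2 D. (\<lambda>k. inner_l2 x (\<Phi> (Tk k) x)) \<longlonglongrightarrow> inner_l2 x (\<Phi> T x)))"

definition instrument :: "nat set \<Rightarrow> 'w set \<Rightarrow> ('w \<Rightarrow> op \<Rightarrow> op) \<Rightarrow> bool" where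
  "instrument D \<Omega> I \<longleftrightarrow> finite \<Omega> \<and>
     (\<forall>\<omega>\<in>\<Omega>. linear_map D (I \<omega>) \<and> cp_map D (I \<omega>) \<and> normal_map D (I \<omega>)) \<and>
     (\<Sum>\<omega>\<in>\<Omega>. I \<omega> (id_op D)) = id_op D"

definition basis_vec :: "nat \<Rightarrow> vec" where
  "basis_vec i = (\<lambda>j. if j = i then 1 else 0)"

definition trace_op :: "nat set \<Rightarrow> op \<Rightarrow> complex" where
  "trace_op D T = (\<Sum>i. if i \<in> D then inner_l2 (basis_vec i) (T (basis_vec i)) else 0)"

definition is_state :: "nat set \<Rightarrow> op \<Rightarrow> bool" where
  "is_state D \<rho> \<longleftrightarrow> positive_op D \<rho> \<and>
     (\<lambda>i. if i \<in> D then inner_l2 (basis_vec i) (\<rho> (basis_vec i)) else 0) sums 1"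

definition repeatable :: "nat set \<Rightarrow> 'w set \<Rightarrow> ('w \<Rightarrow> op \<Rightarrow> op) \<Rightarrow> bool" where
  "repeatable D \<Omega> I \<longleftrightarrow>
     (\<forall>\<rho>. is_state D \<rho> \<longrightarrow> (\<forall>\<omega>1\<in>\<Omega>. \<forall>\<omega>2\<in>\<Omega>. \<omega>1 \<noteq> \<omega>2 \<longrightarrow>
        trace_op D (\<rho> \<circ> I \<omega>1 (I \<omega>2 (id_op D))) = 0))"

definition scale_op :: "real \<Rightarrow> op \<Rightarrow> op" where
  "scale_op c T = (\<lambda>x i. complex_of_real c * T x i)"

definition postproc :: "'a set \<Rightarrow> ('a \<Rightarrow> op) \<Rightarrow> 'b set \<Rightarrow> ('b \<Rightarrow> op) \<Rightarrow> bool" where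
  "postproc \<Omega>A A \<Omega>B B \<longleftrightarrow> (\<exists>\<kappa> :: 'a \<Rightarrow> 'b \<Rightarrow> real.
     (\<forall>\<omega>\<in>\<Omega>A. \<forall>\<omega>'\<in>\<Omega>B. 0 \<le> \<kappa> \<omega> \<omega>' \<and> \<kappa> \<omega> \<omega>' \<le> 1) \<and>
     (\<forall>\<omega>'\<in>\<Omega>B. (\<Sum>\<omega>\<in>\<Omega>A. \<kappa> \<omega> \<omega>') = 1) \<and>
     (\<forall>\<omega>\<in>\<Omega>A. A \<omega> = (\<Sum>\<omega>'\<in>\<Omega>B. scale_op (\<kappa> \<omega> \<omega>') (B \<omega>'))))"

definition obs_equiv :: "'a set \<Rightarrow> ('a \<Rightarrow> op) \<Rightarrow> 'b set \<Rightarrow> ('b \<Rightarrow> op) \<Rightarrow> bool" where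
  "obs_equiv \<Omega>A A \<Omega>B B \<longleftrightarrow> postproc \<Omega>A A \<Omega>B B \<and> postproc \<Omega>B B \<Omega>A A"

definition outcomes :: "'w set \<Rightarrow> nat \<Rightarrow> 'w list set" where
  "outcomes \<Omega> n = {xs. length xs = n \<and> set xs \<subseteq> \<Omega>}"

definition seq_obs :: "nat set \<Rightarrow> ('w \<Rightarrow> op \<Rightarrow> op) \<Rightarrow> 'w list \<Rightarrow> op" where
  "seq_obs D I xs = foldr (\<lambda>\<omega> T. I \<omega> T) xs (id_op D)"

definition sat :: "nat set \<Rightarrow> 'w set \<Rightarrow> ('w \<Rightarrow> op \<Rightarrow> op) \<Rightarrow> enat" where
  "sat D \<Omega> I =
     (if \<exists>n\<ge>1. obs_equiv (outcomes \<Omega> n) (seq_obs D I) (outcomes \<Omega> (Suc n)) (seq_obs D I)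
      then enat (LEAST n. n \<ge> 1 \<and>
              obs_equiv (outcomes \<Omega> n) (seq_obs D I) (outcomes \<Omega> (Suc n)) (seq_obs D I))
      else \<infinity>)"

end

theory Submission
  imports Defs
begin

text \<open>Testing against the rank-one states onto e_i, (e_i + e_k)/sqrt 2 and (e_i + \<i> e_k)/sqrt 2 shows
  that all matrix entries of I_a(I_b(1)) vanish, and a bounded operator with vanishing matrix
  entries is zero. Applying the linear map I_a to 1 = \<Sum>_b I_b(1) then gives I_a(I_a(1)) = I_a(1).
  Hence A_2(a,b) = [a = b] A_1(a): A_1 is obtained from A_2 by forgetting the second outcome and
  A_2 from A_1 by duplicating the outcome, so A_1 and A_2 are equivalent and sat = 1.\<close>

lemma cmod_lin_comb_square_le:
  "(cmod (a * x + b * y))\<^sup>2 \<le> 2 * (cmod a)\<^sup>2 * (cmod x)\<^sup>2 + 2 * (cmod b)\<^sup>2 * (cmod y)\<^sup>2"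
proof -
  have "cmod (a * x + b * y) \<le> cmod a * cmod x + cmod b * cmod y"
    by (metis norm_mult norm_triangle_ineq)
  hence "(cmod (a * x + b * y))\<^sup>2 \<le> (cmod a * cmod x + cmod b * cmod y)\<^sup>2"
    by (simp add: power_mono)
  also have "\<dots> \<le> 2 * (cmod a)\<^sup>2 * (cmod x)\<^sup>2 + 2 * (cmod b)\<^sup>2 * (cmod y)\<^sup>2"
    using zero_le_power2[of "cmod a * cmod x - cmod b * cmod y"]
    by (simp add: power2_eq_square algebra_simps)
  finally show ?thesis .
qed

lemma l2_summable: "x \<in> l2 D \<Longrightarrow> summable (\<lambda>i. (cmod (x i))\<^sup>2)"
  by (simp add: l2_def)

lemma l2_vanishes: "x \<in> l2 D \<Longrightarrow> i \<notin> D \<Longrightarrow> x i = 0"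
  by (simp add: l2_def)

lemma l2_zero: "(0 :: vec) \<in> l2 D"
  by (simp add: l2_def zero_fun_def)

lemma l2_lin_comb:
  assumes "x \<in> l2 D" and "y \<in> l2 D"
  shows "(\<lambda>i. a * x i + b * y i) \<in> l2 D"
proof -
  have "summable (\<lambda>i. 2 * (cmod a)\<^sup>2 * (cmod (x i))\<^sup>2 + 2 * (cmod b)\<^sup>2 * (cmod (y i))\<^sup>2)"
    using assms by (intro summable_add summable_mult l2_summable)
  hence "summable (\<lambda>i. (cmod (a * x i + b * y i))\<^sup>2)"
    by (rule summable_comparison_test[rotated]) (simp add: cmod_lin_comb_square_le)
  thus ?thesis using assms by (simp add: l2_def)
qed

lemma l2_add: "x \<in> l2 D \<Longrightarrow> y \<in> l2 D \<Longrightarrow> (\<lambda>i. x i + y i) \<in> l2 D"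
  using l2_lin_comb[of x D y 1 1] by simp

lemma l2_finite_support:
  "finite F \<Longrightarrow> F \<subseteq> D \<Longrightarrow> \<forall>j. j \<notin> F \<longrightarrow> x j = 0 \<Longrightarrow> x \<in> l2 D"
  unfolding l2_def by (auto intro!: summable_finite[of F])

lemma basis_vec_in_l2: "j \<in> D \<Longrightarrow> basis_vec j \<in> l2 D"
  by (rule l2_finite_support[of "{j}"]) (auto simp: basis_vec_def)

lemma norm_l2_nonneg: "x \<in> l2 D \<Longrightarrow> 0 \<le> norm_l2 x"
  unfolding norm_l2_def by (simp add: suminf_nonneg l2_summable)

lemma cmod_le_norm_l2:
  assumes "x \<in> l2 D"
  shows "cmod (x i) \<le> norm_l2 x"
proof -
  have "(\<Sum>n\<in>{i}. (cmod (x n))\<^sup>2) \<le> (\<Sum>n. (cmod (x n))\<^sup>2)"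
    by (rule sum_le_suminf[OF l2_summable[OF assms]]) auto
  hence "sqrt ((cmod (x i))\<^sup>2) \<le> norm_l2 x"
    unfolding norm_l2_def by (intro real_sqrt_le_mono) simp
  thus ?thesis by simp
qed

lemma norm_l2_scale:
  assumes "x \<in> l2 D"
  shows "norm_l2 (\<lambda>i. c * x i) = cmod c * norm_l2 x"
proof -
  have "(\<Sum>i. (cmod (c * x i))\<^sup>2) = (cmod c)\<^sup>2 * (\<Sum>i. (cmod (x i))\<^sup>2)"
    using suminf_mult[OF l2_summable[OF assms], of "(cmod c)\<^sup>2"]
    by (simp add: norm_mult power_mult_distrib)
  thus ?thesis unfolding norm_l2_def by (simp add: real_sqrt_mult)
qed

lemma norm_l2_add_le:
  assumes x: "x \<in> l2 D" and y: "y \<in> l2 D"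
  shows "norm_l2 (\<lambda>i. x i + y i) \<le> sqrt 2 * (norm_l2 x + norm_l2 y)"
proof -
  define A where "A = (\<Sum>i. (cmod (x i))\<^sup>2)"
  define B where "B = (\<Sum>i. (cmod (y i))\<^sup>2)"
  have "A \<ge> 0" "B \<ge> 0"
    unfolding A_def B_def using x y by (simp_all add: suminf_nonneg l2_summable)
  have "(\<Sum>i. (cmod (x i + y i))\<^sup>2) \<le> (\<Sum>i. 2 * (cmod (x i))\<^sup>2 + 2 * (cmod (y i))\<^sup>2)"
    using cmod_lin_comb_square_le[of 1 _ 1] l2_summable[OF l2_add[OF x y]]
      l2_summable[OF x] l2_summable[OF y]
    by (intro suminf_le summable_add summable_mult) simp_all
  also have "\<dots> = 2 * A + 2 * B"
    unfolding A_def B_def using l2_summable[OF x] l2_summable[OF y]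
    by (simp add: suminf_add[symmetric] suminf_mult summable_mult)
  finally have "norm_l2 (\<lambda>i. x i + y i) \<le> sqrt 2 * sqrt (A + B)"
    unfolding norm_l2_def by (simp add: real_sqrt_mult[symmetric] algebra_simps)
  also have "\<dots> \<le> sqrt 2 * (sqrt A + sqrt B)"
    using sqrt_add_le_add_sqrt[OF \<open>A \<ge> 0\<close> \<open>B \<ge> 0\<close>] by simp
  finally show ?thesis unfolding norm_l2_def A_def B_def .
qed

lemma inner_l2_finite_support_left:
  "finite F \<Longrightarrow> \<forall>j. j \<notin> F \<longrightarrow> v j = 0 \<Longrightarrow> inner_l2 v x = (\<Sum>j\<in>F. cnj (v j) * x j)"
  unfolding inner_l2_def by (rule suminf_finite) auto

lemma inner_l2_finite_support_right:
  "finite F \<Longrightarrow> \<forall>j. j \<notin> F \<longrightarrow> v j = 0 \<Longrightarrow> inner_l2 x v = (\<Sum>j\<in>F. cnj (x j) * v j)"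
  unfolding inner_l2_def by (rule suminf_finite) auto

lemma inner_l2_basis_vec_left: "inner_l2 (basis_vec j) x = x j"
  using inner_l2_finite_support_left[of "{j}" "basis_vec j" x] by (simp add: basis_vec_def)

lemma inner_l2_basis_vec_right:
  assumes "finite F" and "\<forall>j. j \<notin> F \<longrightarrow> v j = 0"
  shows "inner_l2 v (basis_vec j) = cnj (v j)"
proof -
  have "inner_l2 v (basis_vec j) = (\<Sum>i\<in>F. cnj (v i) * basis_vec j i)"
    by (rule inner_l2_finite_support_left[OF assms])
  also have "\<dots> = (\<Sum>i\<in>F. if i = j then cnj (v j) else 0)"
    by (rule sum.cong) (auto simp: basis_vec_def)
  finally show ?thesis using assms by auto
qed

lemma bounded_opD:
  assumes "bounded_op D T"
  shows bounded_op_outside: "x \<notin> l2 D \<Longrightarrow> T x = 0"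
    and bounded_op_l2: "x \<in> l2 D \<Longrightarrow> T x \<in> l2 D"
    and bounded_op_lin_comb: "x \<in> l2 D \<Longrightarrow> y \<in> l2 D \<Longrightarrow>
          T (\<lambda>i. a * x i + b * y i) = (\<lambda>i. a * T x i + b * T y i)"
    and bounded_op_bound: "\<exists>C. \<forall>x\<in>l2 D. norm_l2 (T x) \<le> C * norm_l2 x"
  using assms unfolding bounded_op_def by blast+

lemma bounded_op_zero: "bounded_op D 0"
  unfolding bounded_op_def using l2_zero
  by (auto simp: zero_fun_def norm_l2_def intro!: exI[of _ 0])

lemma bounded_op_id_op: "bounded_op D (id_op D)"
  unfolding bounded_op_def id_op_def
  by (auto simp: l2_lin_comb zero_fun_def intro!: exI[of _ 1])

lemma bounded_op_apply_zero:
  assumes "bounded_op D T"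
  shows "T 0 = 0"
proof -
  have "T (\<lambda>i. 0 * (0::vec) i + 0 * (0::vec) i) = (\<lambda>i. 0 * T 0 i + 0 * T 0 i)"
    using bounded_op_lin_comb[OF assms l2_zero l2_zero] .
  thus ?thesis by (simp add: zero_fun_def)
qed

lemma bounded_op_add:
  assumes S: "bounded_op D S" and T: "bounded_op D T"
  shows "bounded_op D (S + T)"
proof -
  obtain CS where CS: "\<forall>x\<in>l2 D. norm_l2 (S x) \<le> CS * norm_l2 x"
    using bounded_op_bound[OF S] by blast
  obtain CT where CT: "\<forall>x\<in>l2 D. norm_l2 (T x) \<le> CT * norm_l2 x"
    using bounded_op_bound[OF T] by blast
  have "norm_l2 ((S + T) x) \<le> (sqrt 2 * (\<bar>CS\<bar> + \<bar>CT\<bar>)) * norm_l2 x" if x: "x \<in> l2 D" for x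
  proof -
    have "norm_l2 (S x) \<le> \<bar>CS\<bar> * norm_l2 x" "norm_l2 (T x) \<le> \<bar>CT\<bar> * norm_l2 x"
      using CS CT x norm_l2_nonneg[OF x]
      by (meson abs_ge_self mult_right_mono order_trans)+
    hence "sqrt 2 * (norm_l2 (S x) + norm_l2 (T x)) \<le> sqrt 2 * (\<bar>CS\<bar> * norm_l2 x + \<bar>CT\<bar> * norm_l2 x)"
      by (intro mult_left_mono add_mono) simp_all
    moreover have "norm_l2 ((S + T) x) \<le> sqrt 2 * (norm_l2 (S x) + norm_l2 (T x))"
      using norm_l2_add_le[OF bounded_op_l2[OF S x] bounded_op_l2[OF T x]]
      by (simp add: plus_fun_def)
    ultimately show ?thesis by (simp add: distrib_left distrib_right mult.assoc)
  qed
  moreover have "(S + T) (\<lambda>i. a * x i + b * y i) = (\<lambda>i. a * (S + T) x i + b * (S + T) y i)"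
    if "x \<in> l2 D" "y \<in> l2 D" for x y a b
    using bounded_op_lin_comb[OF S that] bounded_op_lin_comb[OF T that]
    by (simp add: fun_eq_iff distrib_left)
  ultimately show ?thesis
    using S T l2_add unfolding bounded_op_def plus_fun_def by auto
qed

lemma bounded_op_sum:
  "finite F \<Longrightarrow> (\<And>j. j \<in> F \<Longrightarrow> bounded_op D (f j)) \<Longrightarrow> bounded_op D (\<Sum>j\<in>F. f j)"
  by (induction F rule: finite_induct) (auto intro: bounded_op_zero bounded_op_add)

lemma linear_map_bounded: "linear_map D \<Phi> \<Longrightarrow> bounded_op D T \<Longrightarrow> bounded_op D (\<Phi> T)"
  unfolding linear_map_def by blast

lemma linear_map_zero:
  assumes "linear_map D \<Phi>"
  shows "\<Phi> 0 = 0"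
proof -
  have "lin_comb_op 0 0 0 0 = 0" by (simp add: lin_comb_op_def fun_eq_iff)
  hence "\<Phi> 0 = lin_comb_op 0 (\<Phi> 0) 0 (\<Phi> 0)"
    using assms bounded_op_zero unfolding linear_map_def by metis
  thus ?thesis by (simp add: lin_comb_op_def fun_eq_iff)
qed

lemma linear_map_add:
  assumes "linear_map D \<Phi>" and "bounded_op D S" and "bounded_op D T"
  shows "\<Phi> (S + T) = \<Phi> S + \<Phi> T"
proof -
  have "lin_comb_op 1 A 1 B = A + B" for A B by (simp add: lin_comb_op_def fun_eq_iff)
  thus ?thesis using assms unfolding linear_map_def by metis
qed

lemma linear_map_sum:
  assumes "linear_map D \<Phi>"
  shows "finite F \<Longrightarrow> (\<And>j. j \<in> F \<Longrightarrow> bounded_op D (f j)) \<Longrightarrow>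
    \<Phi> (\<Sum>j\<in>F. f j) = (\<Sum>j\<in>F. \<Phi> (f j))"
proof (induction F rule: finite_induct)
  case empty
  show ?case using linear_map_zero[OF assms] by (simp add: zero_fun_def)
next
  case (insert a F)
  have "\<Phi> (\<Sum>j\<in>insert a F. f j) = \<Phi> (f a + (\<Sum>j\<in>F. f j))"
    by (simp only: sum.insert[OF insert.hyps])
  also have "\<dots> = \<Phi> (f a) + \<Phi> (\<Sum>j\<in>F. f j)"
    using insert.prems by (intro linear_map_add[OF assms] bounded_op_sum[OF insert.hyps(1)]) auto
  also have "\<Phi> (\<Sum>j\<in>F. f j) = (\<Sum>j\<in>F. \<Phi> (f j))"
    by (rule insert.IH) (simp add: insert.prems)
  also have "\<Phi> (f a) + (\<Sum>j\<in>F. \<Phi> (f j)) = (\<Sum>j\<in>insert a F. \<Phi> (f j))"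
    by (simp only: sum.insert[OF insert.hyps])
  finally show ?case .
qed

definition rank_one_op :: "nat set \<Rightarrow> vec \<Rightarrow> op" where
  "rank_one_op D v = (\<lambda>x. if x \<in> l2 D then (\<lambda>m. inner_l2 v x * v m) else 0)"

lemma bounded_op_rank_one_op:
  assumes F: "finite F" "F \<subseteq> D" and v: "\<forall>j. j \<notin> F \<longrightarrow> v j = 0"
  shows "bounded_op D (rank_one_op D v)"
proof -
  have vl: "v \<in> l2 D" by (rule l2_finite_support[OF F v])
  have image: "(\<lambda>m. c * v m) \<in> l2 D" for c
    using l2_lin_comb[OF vl vl, of c 0] by simp
  have "norm_l2 (rank_one_op D v x) \<le> ((\<Sum>j\<in>F. cmod (v j)) * norm_l2 v) * norm_l2 x"
    if x: "x \<in> l2 D" for x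
  proof -
    have "cmod (inner_l2 v x) = cmod (\<Sum>j\<in>F. cnj (v j) * x j)"
      by (simp add: inner_l2_finite_support_left[OF F(1) v])
    also have "\<dots> \<le> (\<Sum>j\<in>F. cmod (v j) * cmod (x j))"
      by (rule order_trans[OF norm_sum]) (simp add: norm_mult)
    also have "\<dots> \<le> (\<Sum>j\<in>F. cmod (v j) * norm_l2 x)"
      by (intro sum_mono mult_left_mono cmod_le_norm_l2[OF x]) simp
    finally have "cmod (inner_l2 v x) * norm_l2 v \<le> (\<Sum>j\<in>F. cmod (v j) * norm_l2 x) * norm_l2 v"
      by (rule mult_right_mono[OF _ norm_l2_nonneg[OF vl]])
    hence "cmod (inner_l2 v x) * norm_l2 v \<le> (\<Sum>j\<in>F. cmod (v j)) * norm_l2 x * norm_l2 v"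
      by (simp only: sum_distrib_right)
    moreover have "norm_l2 (rank_one_op D v x) = cmod (inner_l2 v x) * norm_l2 v"
      using x by (simp add: rank_one_op_def norm_l2_scale[OF vl])
    ultimately show ?thesis by (simp add: mult_ac)
  qed
  hence "\<exists>C. \<forall>x\<in>l2 D. norm_l2 (rank_one_op D v x) \<le> C * norm_l2 x" by blast
  moreover have "rank_one_op D v (\<lambda>i. a * x i + b * y i)
      = (\<lambda>i. a * rank_one_op D v x i + b * rank_one_op D v y i)"
    if "x \<in> l2 D" "y \<in> l2 D" for x y a b
  proof -
    have "inner_l2 v (\<lambda>i. a * x i + b * y i) = a * inner_l2 v x + b * inner_l2 v y"
      by (simp add: inner_l2_finite_support_left[OF F(1) v] sum.distrib sum_distrib_left algebra_simps)
    thus ?thesis using that l2_lin_comb[OF that]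
      by (simp add: rank_one_op_def fun_eq_iff algebra_simps)
  qed
  ultimately show ?thesis
    unfolding bounded_op_def using image by (simp add: rank_one_op_def)
qed

lemma is_state_rank_one_op:
  assumes F: "finite F" "F \<subseteq> D" and v: "\<forall>j. j \<notin> F \<longrightarrow> v j = 0"
    and unit: "(\<Sum>j\<in>F. (cmod (v j))\<^sup>2) = 1"
  shows "is_state D (rank_one_op D v)"
proof -
  have "Im (inner_l2 x (rank_one_op D v x)) = 0 \<and> Re (inner_l2 x (rank_one_op D v x)) \<ge> 0"
    if x: "x \<in> l2 D" for x
  proof -
    define c where "c = inner_l2 v x"
    have "inner_l2 x (rank_one_op D v x) = (\<Sum>j\<in>F. cnj (x j) * (c * v j))"
      using x v by (simp add: rank_one_op_def c_def inner_l2_finite_support_right[OF F(1)])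
    also have "\<dots> = c * cnj (\<Sum>j\<in>F. cnj (v j) * x j)"
      by (simp add: sum_distrib_left algebra_simps)
    also have "\<dots> = c * cnj c"
      by (simp add: c_def inner_l2_finite_support_left[OF F(1) v])
    also have "\<dots> = complex_of_real ((cmod c)\<^sup>2)"
      by (rule complex_norm_square[symmetric])
    finally show ?thesis by simp
  qed
  moreover have diag: "(if j \<in> D then inner_l2 (basis_vec j) (rank_one_op D v (basis_vec j)) else 0)
      = complex_of_real ((cmod (v j))\<^sup>2)" for j
  proof (cases "j \<in> D")
    case True
    have "inner_l2 (basis_vec j) (rank_one_op D v (basis_vec j)) = inner_l2 v (basis_vec j) * v j"
      using basis_vec_in_l2[OF True] by (simp add: rank_one_op_def inner_l2_basis_vec_left)
    also have "\<dots> = v j * cnj (v j)"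
      by (simp add: inner_l2_basis_vec_right[OF F(1) v])
    also have "\<dots> = complex_of_real ((cmod (v j))\<^sup>2)"
      by (rule complex_norm_square[symmetric])
    finally show ?thesis using True by (simp only: if_True)
  next
    case False
    hence "j \<notin> F" using F(2) by blast
    thus ?thesis using False by (simp add: v)
  qed
  moreover have "(\<lambda>j. complex_of_real ((cmod (v j))\<^sup>2)) sums (\<Sum>j\<in>F. complex_of_real ((cmod (v j))\<^sup>2))"
    by (rule sums_finite[OF F(1)]) (simp add: v)
  moreover have "(\<Sum>j\<in>F. complex_of_real ((cmod (v j))\<^sup>2)) = 1"
    unfolding of_real_sum[symmetric] unit by simp
  ultimately show ?thesis
    unfolding is_state_def positive_op_def diag using bounded_op_rank_one_op[OF F v] by simp
qed

lemma trace_rank_one_op_comp: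
  assumes F: "finite F" "F \<subseteq> D" and v: "\<forall>j. j \<notin> F \<longrightarrow> v j = 0"
    and T: "bounded_op D T"
  shows "trace_op D (rank_one_op D v \<circ> T) = (\<Sum>j\<in>F. \<Sum>m\<in>F. cnj (v m) * T (basis_vec j) m * v j)"
proof -
  have "(if j \<in> D then inner_l2 (basis_vec j) ((rank_one_op D v \<circ> T) (basis_vec j)) else 0)
     = (\<Sum>m\<in>F. cnj (v m) * T (basis_vec j) m * v j)" for j
  proof (cases "j \<in> D")
    case True
    thus ?thesis using bounded_op_l2[OF T basis_vec_in_l2[OF True]]
      by (simp add: rank_one_op_def inner_l2_basis_vec_left
          inner_l2_finite_support_left[OF F(1) v] sum_distrib_right)
  next
    case False
    hence "j \<notin> F" using F(2) by blast
    thus ?thesis using False by (simp add: v)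
  qed
  thus ?thesis
    unfolding trace_op_def by (simp only:) (rule suminf_finite[OF F(1)], simp add: v)
qed

lemma matrix_entries_zero_if_traces_zero:
  assumes T: "bounded_op D T"
    and traces: "\<And>\<rho>. is_state D \<rho> \<Longrightarrow> trace_op D (\<rho> \<circ> T) = 0"
    and "i \<in> D" and "k \<in> D"
  shows "T (basis_vec k) i = 0"
proof -
  define t where "t a b = T (basis_vec b) a" for a b
  have form_zero: "(\<Sum>j\<in>F. \<Sum>m\<in>F. cnj (v m) * t m j * v j) = 0"
    if F: "finite F" "F \<subseteq> D" and v: "\<forall>j. j \<notin> F \<longrightarrow> v j = 0"
      and unit: "(\<Sum>j\<in>F. (cmod (v j))\<^sup>2) = 1" for F v
    using traces[OF is_state_rank_one_op[OF F v unit]] trace_rank_one_op_comp[OF F v T]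
    unfolding t_def by simp
  have diag: "t j j = 0" if "j \<in> D" for j
    using form_zero[of "{j}" "basis_vec j"] that by (simp add: basis_vec_def)
  show ?thesis
  proof (cases "i = k")
    case True
    thus ?thesis using diag \<open>i \<in> D\<close> by (simp add: t_def)
  next
    case ik: False
    define s :: real where "s = 1 / sqrt 2"
    define r where "r = complex_of_real s"
    have s2: "s * s = 1 / 2" by (simp add: s_def)
    have rr: "r * r = 1 / 2" unfolding r_def by (simp flip: of_real_mult add: s2)
    have cnj_r: "cnj r = r" by (simp add: r_def)
    have cmod_r: "(cmod r)\<^sup>2 = 1 / 2" by (simp add: r_def power2_eq_square s2)
    define v where "v c j = (if j = i then r else if j = k then c * r else 0)" for c j
    have quad: "(\<Sum>j\<in>{i, k}. \<Sum>m\<in>{i, k}. cnj (v c m) * t m j * v c j) = 0" if "cmod c = 1" for c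
      using ik that cmod_r \<open>i \<in> D\<close> \<open>k \<in> D\<close>
      by (intro form_zero) (auto simp: v_def norm_mult power_mult_distrib)
    have "r * r * (t k i + t i k) = 0"
      using quad[of 1] ik diag[OF \<open>i \<in> D\<close>] diag[OF \<open>k \<in> D\<close>] cnj_r
      by (simp add: v_def algebra_simps)
    moreover have "r * r * \<i> * (t i k - t k i) = 0"
      using quad[of \<i>] ik diag[OF \<open>i \<in> D\<close>] diag[OF \<open>k \<in> D\<close>] cnj_r
      by (simp add: v_def algebra_simps)
    ultimately have "t k i + t i k = 0" "t i k - t k i = 0"
      using rr by simp_all
    thus ?thesis by (simp add: t_def)
  qed
qed

lemma l2_truncation: "x \<in> l2 D \<Longrightarrow> (\<lambda>j. if j < N then x j else 0) \<in> l2 D"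
  unfolding l2_def by (auto intro!: summable_finite[of "{..<N}"] split: if_splits)

lemma l2_tail: "x \<in> l2 D \<Longrightarrow> (\<lambda>j. if j < N then 0 else x j) \<in> l2 D"
  unfolding l2_def
  by (auto elim!: summable_comparison_test[rotated] intro!: exI[of _ 0])

lemma norm_l2_tail_tendsto_zero:
  assumes "x \<in> l2 D"
  shows "(\<lambda>N. norm_l2 (\<lambda>j. if j < N then 0 else x j)) \<longlonglongrightarrow> 0"
proof -
  define f where "f = (\<lambda>j. (cmod (x j))\<^sup>2)"
  have f: "summable f" unfolding f_def by (rule l2_summable[OF assms])
  have "(\<lambda>j. if j < N then 0 else f j) sums (suminf f - (\<Sum>j<N. f j))" for N
  proof -
    have "(\<lambda>j. f j - (if j < N then f j else 0)) sums (suminf f - (\<Sum>j<N. f j))"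
      using sums_diff[OF summable_sums[OF f] sums_finite[of "{..<N}" "\<lambda>j. if j < N then f j else 0"]]
      by simp
    thus ?thesis by (simp add: if_distrib cong: if_cong)
  qed
  moreover have "(\<lambda>j. (cmod (if j < N then 0 else x j))\<^sup>2) = (\<lambda>j. if j < N then 0 else f j)" for N
    by (simp add: f_def fun_eq_iff)
  ultimately have "norm_l2 (\<lambda>j. if j < N then 0 else x j) = sqrt (suminf f - (\<Sum>j<N. f j))" for N
    unfolding norm_l2_def by (simp add: sums_iff)
  moreover have "(\<lambda>N. sqrt (suminf f - (\<Sum>j<N. f j))) \<longlonglongrightarrow> sqrt (suminf f - suminf f)"
    by (intro tendsto_real_sqrt tendsto_diff tendsto_const summable_LIMSEQ[OF f])
  ultimately show ?thesis by simp
qed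

lemma bounded_op_truncation_eq_zero:
  assumes T: "bounded_op D T" and basis: "\<forall>b\<in>D. T (basis_vec b) = 0" and x: "x \<in> l2 D"
  shows "T (\<lambda>j. if j < N then x j else 0) = 0"
proof (induction N)
  case 0
  show ?case using bounded_op_apply_zero[OF T] by (simp add: zero_fun_def)
next
  case (Suc N)
  show ?case
  proof (cases "N \<in> D")
    case True
    have "(\<lambda>j. if j < Suc N then x j else 0) = (\<lambda>j. 1 * (if j < N then x j else 0) + x N * basis_vec N j)"
      by (auto simp: basis_vec_def fun_eq_iff less_Suc_eq)
    hence "T (\<lambda>j. if j < Suc N then x j else 0)
        = (\<lambda>i. 1 * T (\<lambda>j. if j < N then x j else 0) i + x N * T (basis_vec N) i)"
      by (simp only: bounded_op_lin_comb[OF T l2_truncation[OF x] basis_vec_in_l2[OF True]])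
    thus ?thesis using Suc basis True by (simp add: zero_fun_def)
  next
    case False
    hence "(\<lambda>j. if j < Suc N then x j else 0) = (\<lambda>j. if j < N then x j else 0)"
      using l2_vanishes[OF x] by (auto simp: fun_eq_iff less_Suc_eq)
    thus ?thesis using Suc by simp
  qed
qed

text \<open>The truncations of x are killed by T, so T x = T (tail of x), whose norm tends to 0.\<close>

lemma bounded_op_eq_zero_if_basis_images_zero:
  assumes T: "bounded_op D T" and basis: "\<forall>b\<in>D. T (basis_vec b) = 0"
  shows "T = 0"
proof -
  obtain C where C: "\<forall>x\<in>l2 D. norm_l2 (T x) \<le> C * norm_l2 x"
    using bounded_op_bound[OF T] by blast
  have "T x i = 0" if x: "x \<in> l2 D" for x i
  proof -
    define tail where "tail N = (\<lambda>j. if j < N then 0 else x j)" for N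
    have "T x = T (tail N)" for N
    proof -
      have "x = (\<lambda>j. 1 * (if j < N then x j else 0) + 1 * tail N j)"
        by (simp add: tail_def fun_eq_iff)
      hence "T x = (\<lambda>j. 1 * T (\<lambda>j. if j < N then x j else 0) j + 1 * T (tail N) j)"
        using bounded_op_lin_comb[OF T l2_truncation[OF x] l2_tail[OF x]] unfolding tail_def
        by metis
      thus ?thesis using bounded_op_truncation_eq_zero[OF T basis x] by simp
    qed
    have "cmod (T x i) \<le> \<bar>C\<bar> * norm_l2 (tail N)" for N
    proof -
      have tail: "tail N \<in> l2 D" unfolding tail_def by (rule l2_tail[OF x])
      have "cmod (T x i) \<le> norm_l2 (T (tail N))"
        unfolding \<open>T x = T (tail N)\<close> by (rule cmod_le_norm_l2[OF bounded_op_l2[OF T tail]])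
      also have "\<dots> \<le> C * norm_l2 (tail N)" using C tail by blast
      also have "\<dots> \<le> \<bar>C\<bar> * norm_l2 (tail N)"
        by (rule mult_right_mono[OF abs_ge_self norm_l2_nonneg[OF tail]])
      finally show ?thesis .
    qed
    moreover have "(\<lambda>N. \<bar>C\<bar> * norm_l2 (tail N)) \<longlonglongrightarrow> 0"
      using tendsto_mult_right_zero[OF norm_l2_tail_tendsto_zero[OF x]] by (simp add: tail_def)
    ultimately have "cmod (T x i) \<le> 0"
      by (intro LIMSEQ_le_const[of "\<lambda>N. \<bar>C\<bar> * norm_l2 (tail N)"]) auto
    thus ?thesis by simp
  qed
  thus ?thesis using bounded_op_outside[OF T] by (auto simp: fun_eq_iff)
qed

lemma bounded_op_eq_zero_if_traces_zero:
  assumes T: "bounded_op D T" and traces: "\<And>\<rho>. is_state D \<rho> \<Longrightarrow> trace_op D (\<rho> \<circ> T) = 0"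
  shows "T = 0"
proof (rule bounded_op_eq_zero_if_basis_images_zero[OF T], intro ballI)
  fix b assume "b \<in> D"
  hence "T (basis_vec b) i = 0" for i
    using matrix_entries_zero_if_traces_zero[OF T traces _ \<open>b \<in> D\<close>]
      l2_vanishes[OF bounded_op_l2[OF T basis_vec_in_l2]] by blast
  thus "T (basis_vec b) = 0" by (simp add: fun_eq_iff)
qed

lemma instrument_linear_map: "instrument D \<Omega> I \<Longrightarrow> \<omega> \<in> \<Omega> \<Longrightarrow> linear_map D (I \<omega>)"
  unfolding instrument_def by blast

lemma instrument_effect_bounded:
  "instrument D \<Omega> I \<Longrightarrow> \<omega> \<in> \<Omega> \<Longrightarrow> bounded_op D (I \<omega> (id_op D))"
  by (rule linear_map_bounded[OF instrument_linear_map bounded_op_id_op])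

lemma repeatable_sequential_effect_zero:
  assumes ins: "instrument D \<Omega> I" and rep: "repeatable D \<Omega> I"
    and "a \<in> \<Omega>" "b \<in> \<Omega>" "a \<noteq> b"
  shows "I a (I b (id_op D)) = 0"
proof (rule bounded_op_eq_zero_if_traces_zero)
  show "bounded_op D (I a (I b (id_op D)))"
    using instrument_effect_bounded[OF ins \<open>b \<in> \<Omega>\<close>]
    by (rule linear_map_bounded[OF instrument_linear_map[OF ins \<open>a \<in> \<Omega>\<close>]])
  show "trace_op D (\<rho> \<circ> I a (I b (id_op D))) = 0" if "is_state D \<rho>" for \<rho>
    using rep that assms(3-5) unfolding repeatable_def by blast
qed

lemma repeatable_effect_idempotent:
  assumes ins: "instrument D \<Omega> I" and rep: "repeatable D \<Omega> I" and a: "a \<in> \<Omega>"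
  shows "I a (I a (id_op D)) = I a (id_op D)"
proof -
  have fin: "finite \<Omega>" and effects_sum: "(\<Sum>\<omega>\<in>\<Omega>. I \<omega> (id_op D)) = id_op D"
    using ins unfolding instrument_def by blast+
  have "(\<Sum>\<omega>\<in>\<Omega> - {a}. I a (I \<omega> (id_op D))) = 0"
    using repeatable_sequential_effect_zero[OF ins rep a] by (intro sum.neutral) blast
  hence "I a (I a (id_op D)) = I a (I a (id_op D)) + (\<Sum>\<omega>\<in>\<Omega> - {a}. I a (I \<omega> (id_op D)))"
    by simp
  also have "\<dots> = (\<Sum>\<omega>\<in>\<Omega>. I a (I \<omega> (id_op D)))"
    by (rule sum.remove[OF fin a, symmetric])
  also have "\<dots> = I a (\<Sum>\<omega>\<in>\<Omega>. I \<omega> (id_op D))"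
    by (rule linear_map_sum[OF instrument_linear_map[OF ins a] fin, symmetric])
      (rule instrument_effect_bounded[OF ins])
  also have "\<dots> = I a (id_op D)"
    by (simp only: effects_sum)
  finally show ?thesis .
qed

lemma scale_op_1 [simp]: "scale_op 1 T = T"
  by (simp add: scale_op_def fun_eq_iff)

lemma scale_op_0 [simp]: "scale_op 0 T = 0"
  by (simp add: scale_op_def fun_eq_iff)

lemma postproc_relabelling:
  assumes "finite \<Omega>A" "finite \<Omega>B" and "f ` \<Omega>B \<subseteq> \<Omega>A"
    and "\<And>\<omega>. \<omega> \<in> \<Omega>A \<Longrightarrow> A \<omega> = (\<Sum>\<omega>'\<in>{\<omega>' \<in> \<Omega>B. f \<omega>' = \<omega>}. B \<omega>')"
  shows "postproc \<Omega>A A \<Omega>B B"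
  unfolding postproc_def
proof (intro exI[of _ "\<lambda>\<omega> \<omega>'. if f \<omega>' = \<omega> then 1 else 0"] conjI ballI)
  fix \<omega>' assume "\<omega>' \<in> \<Omega>B"
  thus "(\<Sum>\<omega>\<in>\<Omega>A. if f \<omega>' = \<omega> then 1 else 0 :: real) = 1"
    using assms(1,3) by auto
next
  fix \<omega> assume "\<omega> \<in> \<Omega>A"
  have "(\<Sum>\<omega>'\<in>\<Omega>B. scale_op (if f \<omega>' = \<omega> then 1 else 0) (B \<omega>'))
      = (\<Sum>\<omega>'\<in>\<Omega>B. if f \<omega>' = \<omega> then B \<omega>' else 0)"
    by (intro sum.cong) simp_all
  also have "\<dots> = (\<Sum>\<omega>'\<in>{\<omega>' \<in> \<Omega>B. f \<omega>' = \<omega>}. B \<omega>')"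
    by (rule sum.inter_filter[OF assms(2), symmetric])
  finally show "A \<omega> = (\<Sum>\<omega>'\<in>\<Omega>B. scale_op (if f \<omega>' = \<omega> then 1 else 0) (B \<omega>'))"
    using assms(4) \<open>\<omega> \<in> \<Omega>A\<close> by simp
qed simp_all

lemma finite_outcomes: "finite \<Omega> \<Longrightarrow> finite (outcomes \<Omega> n)"
  unfolding outcomes_def using finite_lists_length_eq by (simp add: conj_commute)

lemma seq_obs_Cons: "seq_obs D I (w # ws) = I w (seq_obs D I ws)"
  by (simp add: seq_obs_def)

lemma seq_obs_Nil: "seq_obs D I [] = id_op D"
  by (simp add: seq_obs_def)

lemma instrument_postproc_1_2:
  assumes ins: "instrument D \<Omega> I"
  shows "postproc (outcomes \<Omega> 1) (seq_obs D I) (outcomes \<Omega> 2) (seq_obs D I)"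
proof (rule postproc_relabelling[where f = "take 1"])
  have fin: "finite \<Omega>" using ins unfolding instrument_def by blast
  thus "finite (outcomes \<Omega> 1)" "finite (outcomes \<Omega> 2)"
    by (simp_all add: finite_outcomes)
  show "take 1 ` outcomes \<Omega> 2 \<subseteq> outcomes \<Omega> 1"
    unfolding outcomes_def using set_take_subset by fastforce
  fix xs assume "xs \<in> outcomes \<Omega> 1"
  then obtain a where a: "a \<in> \<Omega>" "xs = [a]" by (auto simp: outcomes_def length_Suc_conv)
  have "{ys \<in> outcomes \<Omega> 2. take 1 ys = xs} = (\<lambda>b. [a, b]) ` \<Omega>"
    using a by (auto simp: outcomes_def length_Suc_conv numeral_2_eq_2)
  hence "(\<Sum>ys\<in>{ys \<in> outcomes \<Omega> 2. take 1 ys = xs}. seq_obs D I ys)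
      = (\<Sum>b\<in>\<Omega>. I a (I b (id_op D)))"
    by (simp add: sum.reindex inj_on_def seq_obs_Cons seq_obs_Nil)
  also have "\<dots> = I a (\<Sum>b\<in>\<Omega>. I b (id_op D))"
    by (rule linear_map_sum[OF instrument_linear_map[OF ins a(1)] fin, symmetric])
      (rule instrument_effect_bounded[OF ins])
  also have "\<dots> = seq_obs D I xs"
    using ins a(2) unfolding instrument_def by (simp add: seq_obs_Cons seq_obs_Nil)
  finally show "seq_obs D I xs = (\<Sum>ys\<in>{ys \<in> outcomes \<Omega> 2. take 1 ys = xs}. seq_obs D I ys)" ..
qed

lemma repeatable_postproc_2_1:
  assumes ins: "instrument D \<Omega> I" and rep: "repeatable D \<Omega> I"
  shows "postproc (outcomes \<Omega> 2) (seq_obs D I) (outcomes \<Omega> 1) (seq_obs D I)"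
proof (rule postproc_relabelling[where f = "\<lambda>xs. xs @ xs"])
  have fin: "finite \<Omega>" using ins unfolding instrument_def by blast
  thus "finite (outcomes \<Omega> 2)" "finite (outcomes \<Omega> 1)"
    by (simp_all add: finite_outcomes)
  show "(\<lambda>xs. xs @ xs) ` outcomes \<Omega> 1 \<subseteq> outcomes \<Omega> 2"
    unfolding outcomes_def by auto
  fix ys assume "ys \<in> outcomes \<Omega> 2"
  then obtain a b where ab: "a \<in> \<Omega>" "b \<in> \<Omega>" "ys = [a, b]" by (auto simp: outcomes_def length_Suc_conv numeral_2_eq_2)
  show "seq_obs D I ys = (\<Sum>xs\<in>{xs \<in> outcomes \<Omega> 1. xs @ xs = ys}. seq_obs D I xs)"
  proof (cases "a = b")
    case True
    have "{xs \<in> outcomes \<Omega> 1. xs @ xs = ys} = {[a]}"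
      using ab True by (auto simp: outcomes_def length_Suc_conv)
    moreover have "seq_obs D I ys = seq_obs D I [a]"
      using ab True repeatable_effect_idempotent[OF ins rep] by (simp add: seq_obs_Cons seq_obs_Nil)
    ultimately show ?thesis by simp
  next
    case False
    have "{xs \<in> outcomes \<Omega> 1. xs @ xs = ys} = {}"
      using ab False by (auto simp: outcomes_def length_Suc_conv)
    moreover have "seq_obs D I ys = 0"
      using ab False repeatable_sequential_effect_zero[OF ins rep]
      by (simp add: seq_obs_Cons seq_obs_Nil zero_fun_def)
    ultimately show ?thesis by (simp only: sum.empty)
  qed
qed

lemma sat_eq_1_if_obs_equiv:
  assumes "obs_equiv (outcomes \<Omega> 1) (seq_obs D I) (outcomes \<Omega> 2) (seq_obs D I)"
  shows "sat D \<Omega> I = 1"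
proof -
  let ?P = "\<lambda>n. n \<ge> 1 \<and> obs_equiv (outcomes \<Omega> n) (seq_obs D I) (outcomes \<Omega> (Suc n)) (seq_obs D I)"
  have "?P 1" using assms by (simp only: le_refl Suc_1 simp_thms)
  hence "\<exists>n\<ge>1. obs_equiv (outcomes \<Omega> n) (seq_obs D I) (outcomes \<Omega> (Suc n)) (seq_obs D I)"
    by blast
  moreover have "(LEAST n. ?P n) = 1"
  proof (rule Least_equality)
    show "?P 1" by fact
  qed simp
  ultimately show ?thesis unfolding sat_def by (simp only: if_True one_enat_def)
qed

theorem mainTheorem3:
  fixes D :: "nat set" and \<Omega> :: "'w set" and I :: "'w \<Rightarrow> op \<Rightarrow> op"
  assumes "instrument D \<Omega> I"
    and "repeatable D \<Omega> I"
  shows "sat D \<Omega> I = 1"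
proof (rule sat_eq_1_if_obs_equiv)
  show "obs_equiv (outcomes \<Omega> 1) (seq_obs D I) (outcomes \<Omega> 2) (seq_obs D I)"
    unfolding obs_equiv_def
    using instrument_postproc_1_2[OF assms(1)] repeatable_postproc_2_1[OF assms] ..
qed

end
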